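(* Let $\tau>0$, $u_n\in\mathcal V_{[0,1]}$ with $M:=\mathcal M(u_n)>0$, let $X:=\{u\in\mathcal V_{[0,1]}:\mathcal M(u)=M\}$ and $S_{\tau,u_n}:=\operatorname{argmax}_{u\in X}\langle u,e^{-\tau\Delta}u_n\rangle_{\mathcal V}$. Let $\alpha_1<\dots<\alpha_K$ be the distinct values of $e^{-\tau\Delta}u_n$ and $a_{\alpha}:=\sum_{i:(e^{-\tau\Delta}u_n)_i=\alpha}d_i^r$. Then there is a unique $k\in\{1,\dots,K\}$ with \[\sum_{l=k+1}^K a_{\alpha_l} < M \leq \sum_{l=k}^K a_{\alpha_l},\] and $u\in S_{\tau,u_n}$ if and only if $u\in X$ and: $u_i=0$ whenever $(e^{-\tau\Delta}u_n)_i<\alpha_k$; $u_i=1$ whenever $(e^{-\tau\Delta}u_n)_i>\alpha_k$; and $M-\sum_{l=k+1}^K a_{\alpha_l}=\sum_{i:(e^{-\tau\Delta}u_n)_i=\alpha_k}d_i^ru_i$. Consequently $S_{\tau,u_n}$ has exactly one element if and only if $M=\sum_{l=k}^K a_{\alpha_l}$ or there is exactly one $i\in V$ with $(e^{-\tau\Delta}u_n)_i=\alpha_k$.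
   Context: $G=(V,E)$ is a finite, simple, connected, undirected graph with weights $\omega_{ij}=\omega_{ji}>0$ for $ij\in E$, $\omega_{ij}=0$ otherwise; $d_i=\sum_j\omega_{ij}$, $r\in[0,1]$ fixed. $\mathcal V$ = functions $V\to\mathbb R$ with $\langle u,v\rangle_{\mathcal V}=\sum_i u_iv_id_i^r$; $\mathcal V_{[0,1]}$ = functions $V\to[0,1]$. $(\Delta u)_i=d_i^{-r}\sum_j\omega_{ij}(u_i-u_j)$, $e^{-\tau\Delta}$ its matrix exponential. $\mathbf 1$ all-ones; $\mathcal M(u)=\langle u,\mathbf 1\rangle_{\mathcal V}$. *)

theory Defs
  imports "HOL-Analysis.Analysis"
begin

definition deg :: "('v::finite \<Rightarrow> 'v \<Rightarrow> real) \<Rightarrow> 'v \<Rightarrow> real" where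
  "deg w i = (\<Sum>j\<in>UNIV. w i j)"

definition ipV :: "('v::finite \<Rightarrow> 'v \<Rightarrow> real) \<Rightarrow> real \<Rightarrow> ('v \<Rightarrow> real) \<Rightarrow> ('v \<Rightarrow> real) \<Rightarrow> real" where
  "ipV w r u v = (\<Sum>i\<in>UNIV. u i * v i * deg w i powr r)"

definition massV :: "('v::finite \<Rightarrow> 'v \<Rightarrow> real) \<Rightarrow> real \<Rightarrow> ('v \<Rightarrow> real) \<Rightarrow> real" where
  "massV w r u = ipV w r u (\<lambda>_. 1)"

definition lap :: "('v::finite \<Rightarrow> 'v \<Rightarrow> real) \<Rightarrow> real \<Rightarrow> ('v \<Rightarrow> real) \<Rightarrow> ('v \<Rightarrow> real)" where
  "lap w r u = (\<lambda>i. deg w i powr (-r) * (\<Sum>j\<in>UNIV. w i j * (u i - u j)))"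

text \<open>Matrix exponential e^{-tau Delta} applied to u, as its defining power series.\<close>
definition heat :: "('v::finite \<Rightarrow> 'v \<Rightarrow> real) \<Rightarrow> real \<Rightarrow> real \<Rightarrow> ('v \<Rightarrow> real) \<Rightarrow> ('v \<Rightarrow> real)" where
  "heat w r \<tau> u = (\<lambda>i. \<Sum>k. ((-\<tau>) ^ k / fact k) * ((lap w r ^^ k) u) i)"

definition unit_fun :: "('v \<Rightarrow> real) \<Rightarrow> bool" where
  "unit_fun u \<longleftrightarrow> (\<forall>i. 0 \<le> u i \<and> u i \<le> 1)"

definition admissible :: "('v::finite \<Rightarrow> 'v \<Rightarrow> real) \<Rightarrow> real \<Rightarrow> real \<Rightarrow> ('v \<Rightarrow> real) set" where
  "admissible w r M = {u. unit_fun u \<and> massV w r u = M}"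

definition argmax_set :: "('v::finite \<Rightarrow> 'v \<Rightarrow> real) \<Rightarrow> real \<Rightarrow> real \<Rightarrow> ('v \<Rightarrow> real) \<Rightarrow> ('v \<Rightarrow> real) set" where
  "argmax_set w r \<tau> un = (let X = admissible w r (massV w r un) in
     {u \<in> X. \<forall>v\<in>X. ipV w r v (heat w r \<tau> un) \<le> ipV w r u (heat w r \<tau> un)})"

text \<open>alpha l = l-th smallest distinct value (1-based) of f; a alpha = weighted level-set size.\<close>
definition alph :: "('v::finite \<Rightarrow> real) \<Rightarrow> nat \<Rightarrow> real" where
  "alph f l = sorted_list_of_set (range f) ! (l - 1)"

definition lvl :: "('v::finite \<Rightarrow> 'v \<Rightarrow> real) \<Rightarrow> real \<Rightarrow> ('v \<Rightarrow> real) \<Rightarrow> real \<Rightarrow> real" where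
  "lvl w r f \<alpha> = (\<Sum>i\<in>{i. f i = \<alpha>}. deg w i powr r)"

end

theory Submission
  imports Defs
begin

(* Bathtub principle. Put a i = d_i^r and f = e^(-tau Delta) u_n. If u vanishes where f < alpha and
   equals 1 where f > alpha, then for every v with values in [0,1] and the same mass each term of
   sum_i (u i - v i) (f i - alpha) a i is nonnegative, and since the masses agree this sum is
   <u, f> - <v, f>. So u is a maximiser, and v is one only if all terms vanish, i.e. if v is such a
   threshold function for alpha too. The right level alpha = alpha_k is where the weight of the upper
   level sets crosses M. On the level set itself only the mass M - sum_(l>k) a_(alpha_l) is
   prescribed; it can be redistributed between two of its vertices unless the level set is filled
   completely or is a single vertex. Nothing about the heat operator or the graph beyond the
   positivity of the vertex weights d_i^r is used: f is arbitrary. *)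

section \<open>Level sets of a function on a finite set\<close>

definition weight_above :: "('v::finite \<Rightarrow> real) \<Rightarrow> ('v \<Rightarrow> real) \<Rightarrow> real \<Rightarrow> real" where
  "weight_above a f \<alpha> = (\<Sum>i | \<alpha> < f i. a i)"

definition weight_at :: "('v::finite \<Rightarrow> real) \<Rightarrow> ('v \<Rightarrow> real) \<Rightarrow> real \<Rightarrow> real" where
  "weight_at a f \<alpha> = (\<Sum>i | f i = \<alpha>. a i)"

definition level_tail :: "('v::finite \<Rightarrow> real) \<Rightarrow> ('v \<Rightarrow> real) \<Rightarrow> nat \<Rightarrow> real" where
  "level_tail a f k = (\<Sum>l\<in>{k..card (range f)}. weight_at a f (alph f l))"

lemma alph_strict_mono:
  assumes "l \<in> {1..card (range f)}" "l' \<in> {1..card (range f)}" "l < l'"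
  shows "alph f l < alph f l'"
  unfolding alph_def using assms
  by (intro sorted_wrt_nth_less[where P = "(<)"]) auto

lemma inj_on_alph: "inj_on (alph f) {1..card (range f)}"
  by (rule inj_onI) (metis alph_strict_mono less_irrefl linorder_neq_iff)

lemma alph_image: "alph f ` {1..card (range f)} = range f"
proof -
  let ?L = "sorted_list_of_set (range f)"
  have "alph f ` {1..card (range f)} = (!) ?L ` {..<length ?L}"
    unfolding alph_def image_Suc_lessThan[symmetric] by (simp add: image_image)
  also have "\<dots> = set ?L"
    by (simp only: set_conv_nth) (auto simp: image_def)
  finally show ?thesis by simp
qed

lemma alph_less_iff:
  assumes "l \<in> {1..card (range f)}" "l' \<in> {1..card (range f)}"
  shows "alph f l < alph f l' \<longleftrightarrow> l < l'"
  using alph_strict_mono[OF assms] alph_strict_mono[OF assms(2,1)]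
  by (metis less_asym linorder_neq_iff)

lemma alph_image_greater:
  assumes "k \<in> {1..card (range f)}"
  shows "f i \<in> alph f ` {k+1..card (range f)} \<longleftrightarrow> alph f k < f i"
proof -
  obtain l where l: "l \<in> {1..card (range f)}" "f i = alph f l"
    using alph_image by (metis imageE rangeI)
  have "f i \<in> alph f ` {k+1..card (range f)} \<longleftrightarrow> l \<in> {k+1..card (range f)}"
    using l inj_on_alph[of f] assms by (auto simp: inj_on_eq_iff)
  also have "\<dots> \<longleftrightarrow> alph f k < f i"
    using l alph_less_iff[OF assms l(1)] by auto
  finally show ?thesis .
qed

lemma sum_weight_at:
  fixes a f :: "'v::finite \<Rightarrow> real"
  assumes "finite Y"
  shows "(\<Sum>y\<in>Y. weight_at a f y) = (\<Sum>i | f i \<in> Y. a i)"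
proof -
  have "(\<Sum>y\<in>Y. weight_at a f y) = (\<Sum>y\<in>Y. \<Sum>i | i \<in> {i. f i \<in> Y} \<and> f i = y. a i)"
    unfolding weight_at_def by (intro sum.cong) auto
  also have "\<dots> = (\<Sum>i | f i \<in> Y. a i)"
    using assms by (intro sum.group) auto
  finally show ?thesis .
qed

lemma sum_weight_at_alph:
  assumes "J \<subseteq> {1..card (range f)}"
  shows "(\<Sum>l\<in>J. weight_at a f (alph f l)) = (\<Sum>i | f i \<in> alph f ` J. a i)"
proof -
  have "(\<Sum>l\<in>J. weight_at a f (alph f l)) = (\<Sum>y\<in>alph f ` J. weight_at a f y)"
    using inj_on_subset[OF inj_on_alph assms] by (simp add: sum.reindex)
  also have "\<dots> = (\<Sum>i | f i \<in> alph f ` J. a i)"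
    using finite_subset[OF assms] by (intro sum_weight_at) auto
  finally show ?thesis .
qed

lemma level_tail_1: "level_tail a f 1 = (\<Sum>i\<in>UNIV. a i)"
  unfolding level_tail_def sum_weight_at_alph[OF order_refl] alph_image by simp

lemma level_tail_beyond: "level_tail a f (card (range f) + 1) = 0"
  unfolding level_tail_def by simp

lemma level_tail_Suc:
  assumes "k \<in> {1..card (range f)}"
  shows "level_tail a f (k + 1) = weight_above a f (alph f k)"
  unfolding level_tail_def weight_above_def
  using sum_weight_at_alph[of "{k+1..card (range f)}" f a] alph_image_greater[OF assms] assms
  by (auto intro: sum.cong)

lemma level_tail_eq:
  assumes "k \<in> {1..card (range f)}"
  shows "level_tail a f k = weight_above a f (alph f k) + weight_at a f (alph f k)"
proof -
  have "{k..card (range f)} = insert k {k+1..card (range f)}"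
    using assms by auto
  then show ?thesis
    using level_tail_Suc[OF assms] unfolding level_tail_def by simp
qed

lemma antimono_level_tail:
  assumes "\<And>i. 0 \<le> a i"
  shows "antimono (level_tail a f)"
proof (rule antimonoI)
  fix k k' :: nat assume "k \<le> k'"
  moreover have "0 \<le> weight_at a f y" for y
    unfolding weight_at_def using assms by (simp add: sum_nonneg)
  ultimately show "level_tail a f k' \<le> level_tail a f k"
    unfolding level_tail_def by (intro sum_mono2) auto
qed

lemma antimono_crossing_ex1:
  fixes T :: "nat \<Rightarrow> real"
  assumes "antimono T" "M \<le> T 1" "T (K + 1) < M"
  shows "\<exists>!k. k \<in> {1..K} \<and> T (k + 1) < M \<and> M \<le> T k"
proof (rule ex_ex1I)
  define k where "k = (LEAST k. T (k + 1) < M)"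
  have below: "T (k + 1) < M"
    unfolding k_def using assms(3) by (rule LeastI)
  have "k \<le> K"
    unfolding k_def using assms(3) by (rule Least_le)
  moreover have "k \<noteq> 0"
  proof
    assume "k = 0"
    with below assms(2) show False by simp
  qed
  moreover have "M \<le> T k"
    using not_less_Least[of "k - 1" "\<lambda>k. T (k + 1) < M"] \<open>k \<noteq> 0\<close> unfolding k_def by force
  ultimately show "\<exists>k. k \<in> {1..K} \<and> T (k + 1) < M \<and> M \<le> T k"
    using below by (intro exI[of _ k]) auto
next
  have "\<not> k < k'" if "T (k + 1) < M" "M \<le> T k'" for k k'
    using that antimonoD[OF assms(1), of "k + 1" k'] by force
  then show "k = k'" if "k \<in> {1..K} \<and> T (k + 1) < M \<and> M \<le> T k"
    "k' \<in> {1..K} \<and> T (k' + 1) < M \<and> M \<le> T k'" for k k'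
    using that by (meson linorder_neq_iff)
qed

lemma level_tail_crossing_ex1:
  assumes "\<And>i. 0 \<le> a i" "0 < M" "M \<le> (\<Sum>i\<in>UNIV. a i)"
  shows "\<exists>!k. k \<in> {1..card (range f)} \<and> level_tail a f (k + 1) < M \<and> M \<le> level_tail a f k"
proof (rule antimono_crossing_ex1)
  show "antimono (level_tail a f)"
    using assms(1) by (rule antimono_level_tail)
  show "M \<le> level_tail a f 1"
    using assms(3) by (simp only: level_tail_1)
  show "level_tail a f (card (range f) + 1) < M"
    using assms(2) by (simp only: level_tail_beyond)
qed

section \<open>Maximising a linear functional over functions with values in [0,1] and fixed mass\<close>

definition unit_mass :: "('v::finite \<Rightarrow> real) \<Rightarrow> real \<Rightarrow> ('v \<Rightarrow> real) set" where
  "unit_mass a M = {u. unit_fun u \<and> (\<Sum>i\<in>UNIV. u i * a i) = M}"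

definition maximizers :: "('v::finite \<Rightarrow> real) \<Rightarrow> ('v \<Rightarrow> real) \<Rightarrow> real \<Rightarrow> ('v \<Rightarrow> real) set" where
  "maximizers a f M = {u \<in> unit_mass a M. \<forall>v\<in>unit_mass a M.
     (\<Sum>i\<in>UNIV. v i * f i * a i) \<le> (\<Sum>i\<in>UNIV. u i * f i * a i)}"

definition threshold_fun :: "('v \<Rightarrow> real) \<Rightarrow> real \<Rightarrow> ('v \<Rightarrow> real) \<Rightarrow> bool" where
  "threshold_fun f \<alpha> u \<longleftrightarrow> (\<forall>i. f i < \<alpha> \<longrightarrow> u i = 0) \<and> (\<forall>i. \<alpha> < f i \<longrightarrow> u i = 1)"

lemma threshold_fun_mass:
  fixes a f u :: "'v::finite \<Rightarrow> real"
  assumes "threshold_fun f \<alpha> u"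
  shows "(\<Sum>i\<in>UNIV. u i * a i) = weight_above a f \<alpha> + (\<Sum>i | f i = \<alpha>. a i * u i)"
proof -
  have "u i * a i = (if \<alpha> < f i then a i else 0) + (if f i = \<alpha> then a i * u i else 0)" for i
    using assms unfolding threshold_fun_def by (cases "f i" \<alpha> rule: linorder_cases) auto
  then show ?thesis
    unfolding weight_above_def by (simp add: sum.distrib sum.inter_filter[symmetric])
qed

lemma unit_mass_threshold_fun_iff:
  fixes a f u :: "'v::finite \<Rightarrow> real"
  shows "u \<in> unit_mass a M \<and> threshold_fun f \<alpha> u \<longleftrightarrow>
    u \<in> unit_mass a M \<and> (\<forall>i. f i < \<alpha> \<longrightarrow> u i = 0) \<and> (\<forall>i. \<alpha> < f i \<longrightarrow> u i = 1) \<and>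
    M - weight_above a f \<alpha> = (\<Sum>i | f i = \<alpha>. a i * u i)"
  using threshold_fun_mass[of f \<alpha> u a] unfolding unit_mass_def threshold_fun_def by auto

lemma sum_gain_eq:
  fixes a f u v :: "'v \<Rightarrow> real"
  assumes "(\<Sum>i\<in>UNIV. u i * a i) = (\<Sum>i\<in>UNIV. v i * a i)"
  shows "(\<Sum>i\<in>UNIV. u i * f i * a i) - (\<Sum>i\<in>UNIV. v i * f i * a i)
           = (\<Sum>i\<in>UNIV. (u i - v i) * (f i - \<alpha>) * a i)"
proof -
  have "(\<Sum>i\<in>UNIV. (u i - v i) * (f i - \<alpha>) * a i)
          = (\<Sum>i\<in>UNIV. u i * f i * a i) - (\<Sum>i\<in>UNIV. v i * f i * a i)
            - \<alpha> * ((\<Sum>i\<in>UNIV. u i * a i) - (\<Sum>i\<in>UNIV. v i * a i))"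
    by (simp add: algebra_simps sum_subtractf sum_distrib_left sum.distrib)
  with assms show ?thesis by simp
qed

lemma threshold_gain_nonneg:
  fixes a f u v :: "'v \<Rightarrow> real"
  assumes "threshold_fun f \<alpha> u" "unit_fun v" "0 \<le> a i"
  shows "0 \<le> (u i - v i) * (f i - \<alpha>) * a i"
proof (cases "f i" \<alpha> rule: linorder_cases)
  case less
  moreover have "u i = 0" "0 \<le> v i"
    using less assms(1,2) unfolding threshold_fun_def unit_fun_def by auto
  ultimately have "0 \<le> (u i - v i) * (f i - \<alpha>)"
    by (simp add: mult_nonneg_nonpos)
  then show ?thesis
    using assms(3) by simp
next
  case greater
  then show ?thesis
    using assms unfolding threshold_fun_def unit_fun_def by simp
qed simp

lemma threshold_fun_maximizes:
  fixes a f u v :: "'v::finite \<Rightarrow> real"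
  assumes "\<And>i. 0 \<le> a i" "threshold_fun f \<alpha> u" "unit_fun v"
    and "(\<Sum>i\<in>UNIV. u i * a i) = (\<Sum>i\<in>UNIV. v i * a i)"
  shows "(\<Sum>i\<in>UNIV. v i * f i * a i) \<le> (\<Sum>i\<in>UNIV. u i * f i * a i)"
proof -
  have "0 \<le> (\<Sum>i\<in>UNIV. (u i - v i) * (f i - \<alpha>) * a i)"
    using assms by (intro sum_nonneg threshold_gain_nonneg)
  then show ?thesis
    using sum_gain_eq[OF assms(4), of f \<alpha>] by simp
qed

lemma maximizer_threshold_fun:
  fixes a f u v :: "'v::finite \<Rightarrow> real"
  assumes "\<And>i. 0 < a i" "threshold_fun f \<alpha> u" "unit_fun v"
    and "(\<Sum>i\<in>UNIV. u i * a i) = (\<Sum>i\<in>UNIV. v i * a i)"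
    and "(\<Sum>i\<in>UNIV. u i * f i * a i) \<le> (\<Sum>i\<in>UNIV. v i * f i * a i)"
  shows "threshold_fun f \<alpha> v"
proof -
  have nonneg: "0 \<le> (u i - v i) * (f i - \<alpha>) * a i" for i
    using assms(1)[of i] by (intro threshold_gain_nonneg[OF assms(2,3)]) simp
  then have "0 \<le> (\<Sum>i\<in>UNIV. (u i - v i) * (f i - \<alpha>) * a i)"
    by (simp add: sum_nonneg)
  then have "(\<Sum>i\<in>UNIV. (u i - v i) * (f i - \<alpha>) * a i) = 0"
    using sum_gain_eq[OF assms(4), of f \<alpha>] assms(5) by linarith
  then have zero: "(u i - v i) * (f i - \<alpha>) * a i = 0" for i
    using nonneg by (simp add: sum_nonneg_eq_0_iff)
  have "u i = v i" if "f i \<noteq> \<alpha>" for i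
    using zero[of i] that assms(1)[of i] by simp
  then show ?thesis
    using assms(2) unfolding threshold_fun_def by force
qed

lemma maximizers_eq_threshold_funs:
  fixes a f u :: "'v::finite \<Rightarrow> real"
  assumes "\<And>i. 0 < a i" "u \<in> unit_mass a M" "threshold_fun f \<alpha> u"
  shows "maximizers a f M = {v \<in> unit_mass a M. threshold_fun f \<alpha> v}"
proof -
  have a_nonneg: "\<And>i. 0 \<le> a i"
    using assms(1) less_imp_le by blast
  have "(\<Sum>i\<in>UNIV. v i * f i * a i) \<le> (\<Sum>i\<in>UNIV. w i * f i * a i)"
    if "v \<in> unit_mass a M" "threshold_fun f \<alpha> w" "w \<in> unit_mass a M" for v w
  proof (rule threshold_fun_maximizes[OF a_nonneg that(2)])
    show "unit_fun v" "(\<Sum>i\<in>UNIV. w i * a i) = (\<Sum>i\<in>UNIV. v i * a i)"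
      using that(1,3) unfolding unit_mass_def by simp_all
  qed
  moreover have "threshold_fun f \<alpha> v" if "v \<in> maximizers a f M" for v
  proof (rule maximizer_threshold_fun[OF assms(1,3)])
    show "unit_fun v" "(\<Sum>i\<in>UNIV. u i * a i) = (\<Sum>i\<in>UNIV. v i * a i)"
      "(\<Sum>i\<in>UNIV. u i * f i * a i) \<le> (\<Sum>i\<in>UNIV. v i * f i * a i)"
      using that assms(2) unfolding maximizers_def unit_mass_def by simp_all
  qed
  ultimately show ?thesis
    using assms(2,3) unfolding maximizers_def by blast
qed

definition level_fill :: "('v \<Rightarrow> real) \<Rightarrow> real \<Rightarrow> real \<Rightarrow> 'v \<Rightarrow> real" where
  "level_fill f \<alpha> t i = (if \<alpha> < f i then 1 else if f i = \<alpha> then t else 0)"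

lemma threshold_fun_level_fill: "threshold_fun f \<alpha> (level_fill f \<alpha> t)"
  unfolding threshold_fun_def level_fill_def by simp

lemma weight_at_pos:
  assumes "\<And>i. 0 < a i" "\<alpha> \<in> range f"
  shows "0 < weight_at a f \<alpha>"
  unfolding weight_at_def using assms by (intro sum_pos) auto

lemma level_fill_in_unit_mass:
  fixes a f :: "'v::finite \<Rightarrow> real"
  assumes "weight_above a f \<alpha> \<le> M" "M \<le> weight_above a f \<alpha> + weight_at a f \<alpha>"
    and "0 < weight_at a f \<alpha>"
  shows "level_fill f \<alpha> ((M - weight_above a f \<alpha>) / weight_at a f \<alpha>) \<in> unit_mass a M"
proof -
  define t where "t = (M - weight_above a f \<alpha>) / weight_at a f \<alpha>"
  have "0 \<le> t" "t \<le> 1"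
    unfolding t_def using assms by (simp_all add: field_simps)
  then have "unit_fun (level_fill f \<alpha> t)"
    unfolding unit_fun_def level_fill_def by simp
  moreover have "(\<Sum>i | f i = \<alpha>. a i * level_fill f \<alpha> t i) = t * weight_at a f \<alpha>"
    unfolding weight_at_def level_fill_def sum_distrib_left by (intro sum.cong) auto
  then have "(\<Sum>i\<in>UNIV. level_fill f \<alpha> t i * a i) = M"
    using threshold_fun_mass[where a = a, OF threshold_fun_level_fill[of f \<alpha> t]] assms(3) unfolding t_def by simp
  ultimately show ?thesis
    unfolding unit_mass_def t_def by simp
qed

lemma threshold_fun_full_level:
  fixes a f u :: "'v::finite \<Rightarrow> real"
  assumes "\<And>i. 0 < a i" "u \<in> unit_mass a (weight_above a f \<alpha> + weight_at a f \<alpha>)"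
    and "threshold_fun f \<alpha> u" "f i = \<alpha>"
  shows "u i = 1"
proof -
  have "(\<Sum>j | f j = \<alpha>. a j * u j) = weight_at a f \<alpha>"
    using assms(2) threshold_fun_mass[OF assms(3)] unfolding unit_mass_def by simp
  then have "(\<Sum>j | f j = \<alpha>. a j * (1 - u j)) = 0"
    unfolding weight_at_def by (simp add: algebra_simps sum_subtractf)
  moreover have "0 \<le> a j * (1 - u j)" for j
    using assms(1)[of j] assms(2) unfolding unit_mass_def unit_fun_def by simp
  ultimately have "a i * (1 - u i) = 0"
    using assms(4) by (simp add: sum_nonneg_eq_0_iff)
  then show ?thesis
    using assms(1)[of i] by simp
qed

lemma threshold_fun_unique:
  fixes a f u v :: "'v::finite \<Rightarrow> real"
  assumes "\<And>i. 0 < a i" "M = weight_above a f \<alpha> + weight_at a f \<alpha> \<or> (\<exists>!i. f i = \<alpha>)"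
    and "u \<in> unit_mass a M" "threshold_fun f \<alpha> u" "v \<in> unit_mass a M" "threshold_fun f \<alpha> v"
  shows "u = v"
proof
  fix i
  show "u i = v i"
  proof (cases "f i = \<alpha>")
    case False
    then show ?thesis
      using assms(4,6) unfolding threshold_fun_def by (metis linorder_neq_iff)
  next
    case level: True
    from assms(2) show ?thesis
    proof
      assume full: "M = weight_above a f \<alpha> + weight_at a f \<alpha>"
      have "u i = 1" "v i = 1"
        using assms(1,3-6) full level
        by (auto intro: threshold_fun_full_level[where a = a and f = f and \<alpha> = \<alpha>])
      then show ?thesis
        by simp
    next
      assume "\<exists>!i. f i = \<alpha>"
      then have "{j. f j = \<alpha>} = {i}"
        using level by auto
      then have "weight_above a f \<alpha> + a i * u i = M" "weight_above a f \<alpha> + a i * v i = M"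
        using threshold_fun_mass[OF assms(4), of a] threshold_fun_mass[OF assms(6), of a] assms(3,5)
        unfolding unit_mass_def by simp_all
      then have "a i * u i = a i * v i"
        by linarith
      then show ?thesis
        using assms(1)[of i] by simp
    qed
  qed
qed

lemma threshold_fun_transfer:
  fixes a f u :: "'v::finite \<Rightarrow> real"
  assumes a_pos: "\<And>k. 0 < a k" and u: "u \<in> unit_mass a M" "threshold_fun f \<alpha> u"
    and level: "f i = \<alpha>" "f j = \<alpha>" "i \<noteq> j" and "u i < 1" "0 < u j"
  shows "\<exists>v\<in>unit_mass a M. threshold_fun f \<alpha> v \<and> v \<noteq> u"
proof -
  define \<epsilon> where "\<epsilon> = min (a i * (1 - u i)) (a j * u j)"
  define v where "v k = u k + \<epsilon> * ((if k = i then 1 / a i else 0) - (if k = j then 1 / a j else 0))" for k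
  have "0 < \<epsilon>"
    unfolding \<epsilon>_def using assms(7,8) a_pos[of i] a_pos[of j] by simp
  moreover have "\<epsilon> / a i \<le> 1 - u i" "\<epsilon> / a j \<le> u j"
    unfolding \<epsilon>_def using a_pos[of i] a_pos[of j]
    by (simp_all add: pos_divide_le_eq mult.commute[of "a _"])
  moreover have "0 < \<epsilon> / a i" "0 < \<epsilon> / a j"
    using \<open>0 < \<epsilon>\<close> a_pos[of i] a_pos[of j] by simp_all
  moreover have "v i = u i + \<epsilon> / a i" "v j = u j - \<epsilon> / a j"
    unfolding v_def using level(3) by simp_all
  moreover have "v k = u k" if "k \<noteq> i" "k \<noteq> j" for k
    unfolding v_def using that by simp
  moreover have "0 \<le> u k \<and> u k \<le> 1" for k
    using u(1) unfolding unit_mass_def unit_fun_def by simp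
  ultimately have "unit_fun v" "v i \<noteq> u i"
    unfolding unit_fun_def by (smt (verit))+
  have "v k * a k = u k * a k + \<epsilon> * ((if k = i then 1 else 0) - (if k = j then 1 else 0))" for k
    unfolding v_def using a_pos[of i] a_pos[of j] by (simp add: algebra_simps)
  then have "(\<Sum>k\<in>UNIV. v k * a k) = (\<Sum>k\<in>UNIV. u k * a k)"
    by (simp add: sum.distrib sum_subtractf flip: sum_distrib_left)
  moreover have "threshold_fun f \<alpha> v"
    using u(2) level unfolding threshold_fun_def v_def by auto
  ultimately show ?thesis
    using u(1) \<open>unit_fun v\<close> \<open>v i \<noteq> u i\<close> unfolding unit_mass_def by auto
qed

lemma ex1_threshold_fun_iff:
  fixes a f :: "'v::finite \<Rightarrow> real"
  assumes a_pos: "\<And>i. 0 < a i" and "\<alpha> \<in> range f"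
    and bounds: "weight_above a f \<alpha> < M" "M \<le> weight_above a f \<alpha> + weight_at a f \<alpha>"
  shows "(\<exists>!u. u \<in> unit_mass a M \<and> threshold_fun f \<alpha> u)
           \<longleftrightarrow> M = weight_above a f \<alpha> + weight_at a f \<alpha> \<or> (\<exists>!i. f i = \<alpha>)"
proof -
  have "0 < weight_at a f \<alpha>"
    using a_pos assms(2) by (rule weight_at_pos)
  define t where "t = (M - weight_above a f \<alpha>) / weight_at a f \<alpha>"
  have fill: "level_fill f \<alpha> t \<in> unit_mass a M" "threshold_fun f \<alpha> (level_fill f \<alpha> t)"
    unfolding t_def using bounds \<open>0 < weight_at a f \<alpha>\<close>
    by (simp_all add: level_fill_in_unit_mass threshold_fun_level_fill)
  show ?thesis
  proof
    assume ex1: "\<exists>!u. u \<in> unit_mass a M \<and> threshold_fun f \<alpha> u"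
    show "M = weight_above a f \<alpha> + weight_at a f \<alpha> \<or> (\<exists>!i. f i = \<alpha>)"
    proof (rule ccontr)
      assume "\<not> ?thesis"
      then have partial: "M < weight_above a f \<alpha> + weight_at a f \<alpha>" and "\<not> (\<exists>!i. f i = \<alpha>)"
        using bounds(2) by auto
      obtain i j where ij: "f i = \<alpha>" "f j = \<alpha>" "i \<noteq> j"
        using \<open>\<not> (\<exists>!i. f i = \<alpha>)\<close> assms(2) by blast
      have "0 < t" "t < 1"
        unfolding t_def using bounds(1) partial \<open>0 < weight_at a f \<alpha>\<close> by (simp_all add: field_simps)
      then have "\<exists>v\<in>unit_mass a M. threshold_fun f \<alpha> v \<and> v \<noteq> level_fill f \<alpha> t"
        using a_pos fill ij by (intro threshold_fun_transfer[where i = i and j = j]) (simp_all add: level_fill_def)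
      then show False
        using ex1E[OF ex1] fill by metis
    qed
  next
    assume "M = weight_above a f \<alpha> + weight_at a f \<alpha> \<or> (\<exists>!i. f i = \<alpha>)"
    then show "\<exists>!u. u \<in> unit_mass a M \<and> threshold_fun f \<alpha> u"
      using fill a_pos by (intro ex1I[of _ "level_fill f \<alpha> t"]) (auto intro: threshold_fun_unique)
  qed
qed

lemma maximizers_eq_threshold_funs_at_level:
  fixes a f :: "'v::finite \<Rightarrow> real"
  assumes "\<And>i. 0 < a i" "\<alpha> \<in> range f"
    and "weight_above a f \<alpha> \<le> M" "M \<le> weight_above a f \<alpha> + weight_at a f \<alpha>"
  shows "maximizers a f M = {u \<in> unit_mass a M. threshold_fun f \<alpha> u}"
  using assms weight_at_pos[OF assms(1,2)]
  by (intro maximizers_eq_threshold_funs[OF assms(1) level_fill_in_unit_mass threshold_fun_level_fill])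

section \<open>Weighted graphs\<close>

lemma deg_eq_0_imp_UNIV:
  assumes nonneg: "\<And>i j. 0 \<le> w i j" and connected: "\<And>i j. (\<lambda>x y. 0 < w x y)\<^sup>*\<^sup>* i j"
    and "deg w i = 0"
  shows "UNIV = {i}"
proof -
  have no_edge: "w i j = 0" for j
    using assms(3) nonneg unfolding deg_def by (simp add: sum_nonneg_eq_0_iff)
  have "j = i" for j
    using connected[of i j]
  proof (rule converse_rtranclpE)
    fix y
    assume "0 < w i y"
    then show "j = i"
      using no_edge by simp
  qed simp
  then show ?thesis
    by auto
qed

lemma massV_eq: "massV w r u = (\<Sum>i\<in>UNIV. u i * deg w i powr r)"
  unfolding massV_def ipV_def by simp

text \<open>The argument relies on \<open>0 powr r = 0\<close>, also for \<open>r = 0\<close>: a single isolated vertex has mass 0.\<close>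

lemma deg_pos:
  assumes "\<And>i j. 0 \<le> w i j" "\<And>i j. (\<lambda>x y. 0 < w x y)\<^sup>*\<^sup>* i j" "0 < massV w r u"
  shows "0 < deg w i"
proof (rule ccontr)
  assume "\<not> 0 < deg w i"
  moreover have "0 \<le> deg w i"
    unfolding deg_def using assms(1) by (simp add: sum_nonneg)
  ultimately have "deg w i = 0"
    by simp
  then have "massV w r u = 0"
    unfolding massV_eq deg_eq_0_imp_UNIV[OF assms(1,2) \<open>deg w i = 0\<close>] by simp
  with assms(3) show False
    by simp
qed

lemma admissible_eq_unit_mass: "admissible w r M = unit_mass (\<lambda>i. deg w i powr r) M"
  unfolding admissible_def unit_mass_def massV_eq ..

lemma argmax_set_eq_maximizers:
  "argmax_set w r \<tau> un = maximizers (\<lambda>i. deg w i powr r) (heat w r \<tau> un) (massV w r un)"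
  unfolding argmax_set_def maximizers_def admissible_eq_unit_mass ipV_def Let_def ..

lemma sum_lvl_alph_eq_level_tail:
  "(\<Sum>l\<in>{k..card (range f)}. lvl w r f (alph f l)) = level_tail (\<lambda>i. deg w i powr r) f k"
  unfolding level_tail_def lvl_def weight_at_def ..

theorem theorem26:
  fixes w :: "'v::finite \<Rightarrow> 'v \<Rightarrow> real" and r \<tau> :: real and un :: "'v \<Rightarrow> real"
  assumes sym: "\<And>i j. w i j = w j i"
    and nonneg: "\<And>i j. 0 \<le> w i j"
    and loopless: "\<And>i. w i i = 0"
    and connected: "\<And>i j. (\<lambda>x y. 0 < w x y)\<^sup>*\<^sup>* i j"
    and r: "0 \<le> r" "r \<le> 1"
    and tau: "0 < \<tau>"
    and un: "unit_fun un"
    and M: "0 < massV w r un"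
  shows "let M = massV w r un; f = heat w r \<tau> un; K = card (range f);
             S = argmax_set w r \<tau> un;
             P = (\<lambda>k. (\<Sum>l\<in>{k+1..K}. lvl w r f (alph f l)) < M \<and>
                      M \<le> (\<Sum>l\<in>{k..K}. lvl w r f (alph f l)))
         in \<exists>k\<in>{1..K}. P k \<and> (\<forall>k'\<in>{1..K}. P k' \<longrightarrow> k' = k) \<and>
              (\<forall>u. u \<in> S \<longleftrightarrow>
                  (u \<in> admissible w r M \<and>
                   (\<forall>i. f i < alph f k \<longrightarrow> u i = 0) \<and>
                   (\<forall>i. f i > alph f k \<longrightarrow> u i = 1) \<and>
                   M - (\<Sum>l\<in>{k+1..K}. lvl w r f (alph f l))
                     = (\<Sum>i\<in>{i. f i = alph f k}. deg w i powr r * u i))) \<and>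
              ((\<exists>!u. u \<in> S) \<longleftrightarrow>
                  (M = (\<Sum>l\<in>{k..K}. lvl w r f (alph f l)) \<or> (\<exists>!i. f i = alph f k)))"
proof -
  let ?a = "\<lambda>i. deg w i powr r" and ?M = "massV w r un" and ?f = "heat w r \<tau> un"
  have a_pos: "0 < ?a i" for i
    using deg_pos[OF nonneg connected M, of i] by simp
  have "?M \<le> (\<Sum>i\<in>UNIV. ?a i)"
    using un unfolding massV_eq unit_fun_def by (intro sum_mono) (simp add: mult_left_le_one_le)
  then obtain k where k: "k \<in> {1..card (range ?f)}" "level_tail ?a ?f (k + 1) < ?M" "?M \<le> level_tail ?a ?f k"
    and k_unique: "\<And>k'. k' \<in> {1..card (range ?f)} \<and> level_tail ?a ?f (k' + 1) < ?M \<and> ?M \<le> level_tail ?a ?f k' \<Longrightarrow> k' = k"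
    using level_tail_crossing_ex1[of ?a ?M ?f] a_pos M less_imp_le by metis
  define \<alpha> where "\<alpha> = alph ?f k"
  have "\<alpha> \<in> range ?f"
    using alph_image k(1) unfolding \<alpha>_def by blast
  have bounds: "weight_above ?a ?f \<alpha> < ?M" "?M \<le> weight_above ?a ?f \<alpha> + weight_at ?a ?f \<alpha>"
    using k level_tail_Suc[OF k(1)] level_tail_eq[OF k(1)] unfolding \<alpha>_def by simp_all
  have S: "argmax_set w r \<tau> un = {u \<in> unit_mass ?a ?M. threshold_fun ?f \<alpha> u}"
    unfolding argmax_set_eq_maximizers
    using maximizers_eq_threshold_funs_at_level[OF _ \<open>\<alpha> \<in> range ?f\<close>] a_pos bounds by simp
  show ?thesis
    unfolding Let_def sum_lvl_alph_eq_level_tail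
    apply (intro bexI[OF _ k(1)] conjI allI k(2,3))
    subgoal
      using k_unique by blast
    subgoal for u
      unfolding S admissible_eq_unit_mass level_tail_Suc[OF k(1)] \<alpha>_def[symmetric] using unit_mass_threshold_fun_iff[of u ?a ?M ?f \<alpha>] by simp
    subgoal
      unfolding S level_tail_eq[OF k(1)] \<alpha>_def[symmetric]
      using ex1_threshold_fun_iff[OF a_pos \<open>\<alpha> \<in> range ?f\<close> bounds] by simp
    done
qed

end
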